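(* Let $\mathcal O$ be a cyclic operad and $n\ge1$. Then $\psi_n\circ\phi_n = M_n$ as maps $\mathcal{OG}\to\mathcal{OG}$.
   Context: Work over $\mathbb R$. $\mathcal O$ is a cyclic operad; for $m\ge 2$, $\mathcal S[m]=(\bigoplus_L\mathcal O[m-1])_{\Sigma_m}$ is the space of $\mathcal O$-spiders with $m$ legs (sum over labelings $L$ of the legs of an $m$-star by $\{0,\dots,m-1\}$). An orientation of a graph (finite 1-dimensional CW complex) is an ordering of its vertices plus a direction on each edge, up to even numbers of vertex transpositions and edge reversals. An $\mathcal O$-graph is an oriented graph without univalent vertices whose vertices are colored by $\mathcal O$-spiders with legs identified with the incident half-edges; $\mathcal{OG}$ is spanned by $\mathcal O$-graphs modulo $(\mathbf X,or)=-(\mathbf X,-or)$ and linearity in each vertex coloring. Let $V_n=\mathbb R^{2n}$ with basis $B_n=\{p_1,\dots,p_n,q_1,\dots,q_n\}$ and standard symplectic form $\omega$ ($\omega(p_i,q_j)=\delta_{ij}=-\omega(q_j,p_i)$, others $0$). $\mathfrak a\mathcal O_n=\bigoplus_{m\ge2}(\mathcal S[m]\otimes V_n^{\otimes m})_{\Sigma_m}$, spanned by symplecto-spiders (spiders with a vector of $V_n$ on each leg). $\phi_n:\mathcal{OG}\to\wedge\mathfrak a\mathcal O_n$: fix a representative of the orientation of $\mathbf X$ (vertex order, edge directions). A state $s$ assigns an element of $B_n$ to each half-edge so that the two half-edges of each edge receive $p_i$ and $q_i$ for some $i$; the sign of an edge is $+1$ if its initial half-edge gets $p_i$ and $-1$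 if it gets $q_i$, and $\sigma(s)$ is the product of the edge signs. Cutting every edge at its midpoint gives symplecto-spiders $\mathbf s_1,\dots,\mathbf s_k$ indexed by the vertex order; $\mathbf X\{s\}=\mathbf s_1\wedge\cdots\wedge\mathbf s_k$ and $\phi_n(\mathbf X)=\sum_s\sigma(s)\mathbf X\{s\}$. $\psi_n:\wedge\mathfrak a\mathcal O_n\to\mathcal{OG}$: for a pairing $\pi$ of all legs of $\mathbf s_1,\dots,\mathbf s_k$, glue legs according to $\pi$ to get an $\mathcal O$-graph $(\mathbf s_1\wedge\cdots\wedge\mathbf s_k)^\pi$ with vertex $j$ colored by the spider of $\mathbf s_j$, vertices ordered $1,\dots,k$, and edges directed arbitrarily; the weight of an edge is $\omega(v_1,v_2)$ where $v_1,v_2$ are the vectors on its initial and terminal half-edges, and $w(\pi)$ is the product of the weights (the product $w(\pi)(\cdots)^\pi$ is independent of the edge directions). $\psi_n(\mathbf s_1\wedge\cdots\wedge\mathbf s_k)=\sum_\pi w(\pi)(\mathbf s_1\wedge\cdots\wedge\mathbf s_k)^\pi$. $M_n:\mathcal{OG}\to\mathcal{OG}$: for a pairing $\pi$ of the half-edges $H(X)$, $X^\pi$ is obtained by cutting all edges and regluing according to $\pi$. The union of the chord diagrams of $\pi$ and of the standard pairing $\{x,\bar x\}$ is a union $C(\pi)$ of circles with $c(\pi)$ components; choosing a representative orientation of $X$ whose edge directions are coherent around each circle, edges of $X^\pi$ get the induced directions and vertices keep their order, giving the $\mathcal O$-graph $\mathbf X^\pi$. $M_n(\mathbf X)=\sum_\pi(2n)^{c(\pi)}\mathbf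 X^\pi$. *)

theory Defs
  imports Complex_Main "HOL-Combinatorics.Permutations" "HOL-Library.FuncSet"
begin

text \<open>The components O[r] of the operad are modelled as real subspaces
 O r of an ambient real vector space 'v.  For m legs, Op (m-1) carries the
 action of the permutations of the leg labels {0..m-1} (the cyclic structure):
 act m sigma x.  Only this structure enters the definitions of phi_n, psi_n, M_n.\<close>

definition cyclic_sigma_module ::
  "(nat \<Rightarrow> 'v::real_vector set) \<Rightarrow> (nat \<Rightarrow> (nat \<Rightarrow> nat) \<Rightarrow> 'v \<Rightarrow> 'v) \<Rightarrow> bool" where
  "cyclic_sigma_module Op act \<longleftrightarrow>
     (\<forall>m\<ge>2. subspace (Op (m - 1))
        \<and> (\<forall>x\<in>Op (m - 1). act m id x = x)
        \<and> (\<forall>\<sigma>. \<sigma> permutes {..<m} \<longrightarrow>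
              (\<forall>x\<in>Op (m - 1). act m \<sigma> x \<in> Op (m - 1))
            \<and> (\<forall>x\<in>Op (m - 1). \<forall>y\<in>Op (m - 1). \<forall>a b.
                  act m \<sigma> (a *\<^sub>R x + b *\<^sub>R y) = a *\<^sub>R act m \<sigma> x + b *\<^sub>R act m \<sigma> y)
            \<and> (\<forall>\<rho>. \<rho> permutes {..<m} \<longrightarrow>
                  (\<forall>x\<in>Op (m - 1). act m (\<sigma> \<circ> \<rho>) x = act m \<sigma> (act m \<rho> x)))))"

text \<open>A representative: half-edges {..<og_nhe}, vertices {..<og_nv} (the vertex
 order is the numbering), directed edges og_edges as pairs (initial, terminal)
 of half-edges, og_att h = vertex of half-edge h, og_lab h = label of the leg h
 of the spider at its vertex, og_col v = element of O[m-1] colouring vertex v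
 (m its valence); (og_lab, og_col) at v is a representative of an element
 of S[m] (summand indexed by the labelling).\<close>

record 'v ograph =
  og_nhe :: nat
  og_nv :: nat
  og_edges :: "(nat \<times> nat) set"
  og_att :: "nat \<Rightarrow> nat"
  og_lab :: "nat \<Rightarrow> nat"
  og_col :: "nat \<Rightarrow> 'v"

definition og_deg :: "'v ograph \<Rightarrow> nat \<Rightarrow> nat" where
  "og_deg X v = card {h. h < og_nhe X \<and> og_att X h = v}"

definition edge_structure :: "nat \<Rightarrow> (nat \<times> nat) set \<Rightarrow> bool" where
  "edge_structure N E \<longleftrightarrow>
     (\<forall>(a, b)\<in>E. a < N \<and> b < N \<and> a \<noteq> b)
     \<and> (\<forall>h<N. \<exists>!e. e \<in> E \<and> (fst e = h \<or> snd e = h))"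

definition valid_ograph :: "(nat \<Rightarrow> 'v set) \<Rightarrow> 'v ograph \<Rightarrow> bool" where
  "valid_ograph Op X \<longleftrightarrow>
     edge_structure (og_nhe X) (og_edges X)
     \<and> (\<forall>h<og_nhe X. og_att X h < og_nv X)
     \<and> (\<forall>v<og_nv X. 2 \<le> og_deg X v
          \<and> bij_betw (og_lab X) {h. h < og_nhe X \<and> og_att X h = v} {..<og_deg X v}
          \<and> og_col X v \<in> Op (og_deg X v - 1))"

text \<open>G' is isomorphic to G via a bijection beta of half-edges and a
 renumbering tau of the vertices (tau changes the vertex order).\<close>
definition og_iso_with ::
  "(nat \<Rightarrow> nat) \<Rightarrow> (nat \<Rightarrow> nat) \<Rightarrow> 'v ograph \<Rightarrow> 'v ograph \<Rightarrow> bool" where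
  "og_iso_with \<beta> \<tau> G G' \<longleftrightarrow>
     og_nhe G' = og_nhe G \<and> og_nv G' = og_nv G
     \<and> \<beta> permutes {..<og_nhe G} \<and> \<tau> permutes {..<og_nv G}
     \<and> og_edges G' = map_prod \<beta> \<beta> ` og_edges G
     \<and> (\<forall>h<og_nhe G. og_att G' (\<beta> h) = \<tau> (og_att G h) \<and> og_lab G' (\<beta> h) = og_lab G h)
     \<and> (\<forall>v<og_nv G. og_col G' (\<tau> v) = og_col G v)"

definition reverse_edge :: "nat \<times> nat \<Rightarrow> 'v ograph \<Rightarrow> 'v ograph" where
  "reverse_edge e G = G\<lparr>og_edges := (og_edges G - {e}) \<union> {prod.swap e}\<rparr>"

definition relabel_spider ::
  "(nat \<Rightarrow> (nat \<Rightarrow> nat) \<Rightarrow> 'v \<Rightarrow> 'v) \<Rightarrow> nat \<Rightarrow> (nat \<Rightarrow> nat) \<Rightarrow> 'v ograph \<Rightarrow> 'v ograph" where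
  "relabel_spider act v \<sigma> G =
     G\<lparr>og_lab := (\<lambda>h. if h < og_nhe G \<and> og_att G h = v then \<sigma> (og_lab G h) else og_lab G h),
       og_col := (og_col G)(v := act (og_deg G v) \<sigma> (og_col G v))\<rparr>"

definition recolor :: "nat \<Rightarrow> 'v \<Rightarrow> 'v ograph \<Rightarrow> 'v ograph" where
  "recolor v x G = G\<lparr>og_col := (og_col G)(v := x)\<rparr>"

text \<open>F : O-graph representatives \<Rightarrow> 'w factors through OG (F respects
 isomorphism, (X,or) = -(X,-or), the coinvariants defining S[m], and is
 linear in each vertex colouring).  Two elements of OG coincide iff all such
 F (for all real vector spaces 'w) agree on them.\<close>
definition respects_OG ::
  "(nat \<Rightarrow> 'v::real_vector set) \<Rightarrow> (nat \<Rightarrow> (nat \<Rightarrow> nat) \<Rightarrow> 'v \<Rightarrow> 'v)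
     \<Rightarrow> ('v ograph \<Rightarrow> 'w::real_vector) \<Rightarrow> bool" where
  "respects_OG Op act F \<longleftrightarrow>
     (\<forall>G G' \<beta> \<tau>. valid_ograph Op G \<and> valid_ograph Op G' \<and> og_iso_with \<beta> \<tau> G G'
         \<longrightarrow> F G' = of_int (sign \<tau>) *\<^sub>R F G)
   \<and> (\<forall>G e. valid_ograph Op G \<and> e \<in> og_edges G \<longrightarrow> F (reverse_edge e G) = - F G)
   \<and> (\<forall>G v \<sigma>. valid_ograph Op G \<and> v < og_nv G \<and> \<sigma> permutes {..<og_deg G v}
         \<longrightarrow> F (relabel_spider act v \<sigma> G) = F G)
   \<and> (\<forall>G v x y a b. valid_ograph Op G \<and> v < og_nv G
         \<and> x \<in> Op (og_deg G v - 1) \<and> y \<in> Op (og_deg G v - 1)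
         \<longrightarrow> F (recolor v (a *\<^sub>R x + b *\<^sub>R y) G)
             = a *\<^sub>R F (recolor v x G) + b *\<^sub>R F (recolor v y G))"

text \<open>Basis B_n of V_n: (i, True) is p_(i+1), (i, False) is q_(i+1), i < n.\<close>
definition sbasis :: "nat \<Rightarrow> (nat \<times> bool) set" where
  "sbasis n = {..<n} \<times> UNIV"

definition omega :: "nat \<times> bool \<Rightarrow> nat \<times> bool \<Rightarrow> real" where
  "omega x y = (if fst x = fst y \<and> snd x \<and> \<not> snd y then 1
                else if fst x = fst y \<and> \<not> snd x \<and> snd y then -1 else 0)"

definition states :: "nat \<Rightarrow> 'v ograph \<Rightarrow> (nat \<Rightarrow> nat \<times> bool) set" where
  "states n X = {s \<in> {..<og_nhe X} \<rightarrow>\<^sub>E sbasis n.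
      \<forall>(a, b)\<in>og_edges X. \<exists>i<n. (s a = (i, True) \<and> s b = (i, False))
                                \<or> (s a = (i, False) \<and> s b = (i, True))}"

definition state_sign :: "'v ograph \<Rightarrow> (nat \<Rightarrow> nat \<times> bool) \<Rightarrow> real" where
  "state_sign X s = (\<Prod>(a, b)\<in>og_edges X. if snd (s a) then 1 else -1)"

definition pairings :: "nat \<Rightarrow> (nat \<Rightarrow> nat) set" where
  "pairings N = {\<pi> \<in> {..<N} \<rightarrow>\<^sub>E {..<N}. \<forall>h<N. \<pi> h \<noteq> h \<and> \<pi> (\<pi> h) = h}"

text \<open>Edges of a pairing, each directed from the smaller half-edge (an
 arbitrary choice; psi does not depend on it).\<close>
definition pairing_edges_min :: "nat \<Rightarrow> (nat \<Rightarrow> nat) \<Rightarrow> (nat \<times> nat) set" where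
  "pairing_edges_min N \<pi> = {(a, \<pi> a) | a. a < N \<and> a < \<pi> a}"

text \<open>psi_n(phi_n(X)) = sum_s sigma(s) sum_pi w(pi) (X{s})^pi, where
 (X{s})^pi has the vertices (with order and spiders) of X and edges given by pi.\<close>
definition psi_phi ::
  "nat \<Rightarrow> ('v ograph \<Rightarrow> 'w::real_vector) \<Rightarrow> 'v ograph \<Rightarrow> 'w" where
  "psi_phi n F X =
     (\<Sum>s\<in>states n X. state_sign X s *\<^sub>R
        (\<Sum>\<pi>\<in>pairings (og_nhe X).
           (\<Prod>(a, b)\<in>pairing_edges_min (og_nhe X) \<pi>. omega (s a) (s b))
             *\<^sub>R F (X\<lparr>og_edges := pairing_edges_min (og_nhe X) \<pi>\<rparr>)))"

definition partner :: "(nat \<times> nat) set \<Rightarrow> nat \<Rightarrow> nat" where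
  "partner E h = (THE h'. (h, h') \<in> E \<or> (h', h) \<in> E)"

text \<open>c(pi): number of circles of the union of the chord diagrams of pi and of
 the standard pairing (the edges of X).\<close>
definition num_circles :: "nat \<Rightarrow> (nat \<times> nat) set \<Rightarrow> (nat \<Rightarrow> nat) \<Rightarrow> nat" where
  "num_circles N E \<pi> =
     card ({..<N} // ({(h, partner E h) | h. h < N} \<union> {(h, \<pi> h) | h. h < N})\<^sup>*)"

definition reverse_edges :: "(nat \<times> nat) set \<Rightarrow> (nat \<times> nat) set \<Rightarrow> (nat \<times> nat) set" where
  "reverse_edges R E = (E - R) \<union> prod.swap ` R"

text \<open>Edge directions E are coherent around every circle of C(pi) iff each
 pi-chord joins an initial and a terminal half-edge.\<close>
definition coherent :: "nat \<Rightarrow> (nat \<times> nat) set \<Rightarrow> (nat \<Rightarrow> nat) \<Rightarrow> bool" where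
  "coherent N E \<pi> \<longleftrightarrow> (\<forall>h<N. h \<in> fst ` E \<longleftrightarrow> \<pi> h \<notin> fst ` E)"

definition coherent_reversal :: "'v ograph \<Rightarrow> (nat \<Rightarrow> nat) \<Rightarrow> (nat \<times> nat) set" where
  "coherent_reversal X \<pi> =
     (SOME R. R \<subseteq> og_edges X \<and> coherent (og_nhe X) (reverse_edges R (og_edges X)) \<pi>)"

text \<open>Induced directions: the edge {a, pi a} of X^pi goes from the half-edge
 which is initial (in the coherent orientation) to the one which is terminal.\<close>
definition induced_edges :: "nat \<Rightarrow> (nat \<times> nat) set \<Rightarrow> (nat \<Rightarrow> nat) \<Rightarrow> (nat \<times> nat) set" where
  "induced_edges N E \<pi> = {(a, \<pi> a) | a. a < N \<and> a \<in> fst ` E}"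

text \<open>The bold X^pi, written with the vertex order of X: reversing the
 edges in R changes the orientation by (-1)^|R|.\<close>
definition M_op :: "nat \<Rightarrow> ('v ograph \<Rightarrow> 'w::real_vector) \<Rightarrow> 'v ograph \<Rightarrow> 'w" where
  "M_op n F X =
     (\<Sum>\<pi>\<in>pairings (og_nhe X).
        let R = coherent_reversal X \<pi> in
        ((2 * real n) ^ num_circles (og_nhe X) (og_edges X) \<pi> * (-1) ^ card R)
          *\<^sub>R F (X\<lparr>og_edges := induced_edges (og_nhe X) (reverse_edges R (og_edges X)) \<pi>\<rparr>))"

end

(* Expanding psi_n (phi_n X) gives a double sum over states s of X and pairings pi of its
   half-edges; it is compared with M_n X one pairing at a time.

   The edges of X and the chords of pi are two fixed-point-free involutions of the
   half-edges, so their union, the disjoint union C(pi) of circles, is properly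
   two-colourable; reversing the edges of X whose initial half-edge has the wrong colour
   makes the directions coherent.  Reversing an edge negates both the omega-weight and the
   oriented graph, so the pi-summand may be computed with the chords directed by this
   coherent orientation.  The weight of a state then vanishes unless s puts dual basis
   vectors p_i, q_i at the two ends of every chord as well as of every edge.  For such s
   the weight times sigma(s) is (-1)^|R|, R the set of reversed edges, and dualising s on
   the terminal half-edges identifies these states with the functions constant on each
   circle, of which there are (2n)^c(pi). *)

theory Submission
  imports Defs
begin

section \<open>Two-colourings of pairs of fixed-point-free involutions\<close>

definition fpf_involution_on :: "'a set \<Rightarrow> ('a \<Rightarrow> 'a) \<Rightarrow> bool" where
  "fpf_involution_on S p \<longleftrightarrow> (\<forall>h\<in>S. p h \<in> S \<and> p h \<noteq> h \<and> p (p h) = h)"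

lemma fpf_involution_onD:
  "fpf_involution_on S p \<Longrightarrow> h \<in> S \<Longrightarrow> p h \<in> S \<and> p h \<noteq> h \<and> p (p h) = h"
  unfolding fpf_involution_on_def by blast

lemma fpf_involution_on_splice:
  assumes q: "fpf_involution_on S q" and "a \<in> S" "b \<in> S" "a \<noteq> b"
  shows "fpf_involution_on (S - {a, b}) (q(q a := q b, q b := q a))"
  unfolding fpf_involution_on_def
proof
  fix h assume h: "h \<in> S - {a, b}"
  have "q h \<in> S" "q h \<noteq> h" "q (q h) = h" "q a \<in> S" "q a \<noteq> a" "q (q a) = a"
    "q b \<in> S" "q b \<noteq> b" "q (q b) = b"
    using fpf_involution_onD[OF q] h assms(2,3) by auto
  then show "(q(q a := q b, q b := q a)) h \<in> S - {a, b} \<and> (q(q a := q b, q b := q a)) h \<noteq> h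
      \<and> (q(q a := q b, q b := q a)) ((q(q a := q b, q b := q a)) h) = h"
    using h assms(4) by (cases "q a = b") auto
qed

lemma two_colouring_extend:
  fixes c c' :: "'a \<Rightarrow> bool"
  assumes p: "fpf_involution_on S p" and q: "fpf_involution_on S q" and a: "a \<in> S"
    and c': "\<forall>h\<in>S - {a, p a}. c' (p h) \<noteq> c' h
      \<and> c' ((q(q a := q (p a), q (p a) := q a)) h) \<noteq> c' h"
    and agree: "\<forall>h\<in>S - {a, p a}. c h = c' h"
    and ends: "c (p a) \<noteq> c a" "c (q a) \<noteq> c a" "c (q (p a)) \<noteq> c (p a)"
  shows "\<forall>h\<in>S. c (p h) \<noteq> c h \<and> c (q h) \<noteq> c h"
proof -
  define b where "b = p a"
  define q' where "q' = q(q a := q b, q b := q a)"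
  have ab: "b \<in> S" "b \<noteq> a" "p b = a"
    using fpf_involution_onD[OF p a] by (auto simp: b_def)
  have p_S': "fpf_involution_on (S - {a, b}) p"
    using fpf_involution_on_splice[OF p a ab(1) ab(2)[symmetric]] ab
    by (simp add: b_def fun_upd_idem)
  have q'_S': "fpf_involution_on (S - {a, b}) q'"
    unfolding q'_def using fpf_involution_on_splice[OF q a ab(1) ab(2)[symmetric]] .
  have cp: "c (p h) \<noteq> c h" if "h \<in> S" for h
  proof (cases "h \<in> S - {a, b}")
    case True
    then show ?thesis using c' agree fpf_involution_onD[OF p_S'] by (metis b_def)
  next
    case False
    then have "h = a \<or> h = b" using that by blast
    then show ?thesis using ends(1) ab by (auto simp: b_def)
  qed
  have cq: "c (q h) \<noteq> c h" if "h \<in> S" for h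
  proof (cases "h \<in> S - {a, b} \<and> h \<noteq> q a \<and> h \<noteq> q b")
    case True
    then have "q' h = q h" by (simp add: q'_def)
    then show ?thesis using c' agree fpf_involution_onD[OF q'_S'] True by (metis b_def q'_def)
  next
    case False
    then have "h = a \<or> h = b \<or> h = q a \<or> h = q b" using that by blast
    moreover have "q (q a) = a" "q (q b) = b" using fpf_involution_onD[OF q] a ab(1) by auto
    moreover have "c (q a) \<noteq> c a" "c (q b) \<noteq> c b" using ends(2,3) by (simp_all add: b_def)
    ultimately show ?thesis by metis
  qed
  show ?thesis using cp cq by blast
qed

(* The contracted pair forces c' (q a) and c' (q (p a)) to differ, so a and p a can get
   opposite colours, each opposite to the colour of its q-partner. *)
lemma two_colouring_splice:
  fixes c' :: "'a \<Rightarrow> bool"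
  assumes p: "fpf_involution_on S p" and q: "fpf_involution_on S q" and a: "a \<in> S"
    and c': "\<forall>h\<in>S - {a, p a}. c' (p h) \<noteq> c' h
      \<and> c' ((q(q a := q (p a), q (p a) := q a)) h) \<noteq> c' h"
  shows "\<exists>c :: 'a \<Rightarrow> bool. \<forall>h\<in>S. c (p h) \<noteq> c h \<and> c (q h) \<noteq> c h"
proof -
  define b where "b = p a"
  have ab: "b \<in> S" "b \<noteq> a"
    using fpf_involution_onD[OF p a] by (auto simp: b_def)
  have qa: "q a \<in> S" "q a \<noteq> a" "q (q a) = a" and qb: "q b \<in> S" "q b \<noteq> b" "q (q b) = b"
    using fpf_involution_onD[OF q] a ab(1) by auto
  define x where "x = (if q a = b then True else \<not> c' (q a))"
  define c where "c = c'(a := x, b := \<not> x)"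
  have agree: "\<forall>h\<in>S - {a, b}. c h = c' h"
    by (simp add: c_def)
  have "c (q a) \<noteq> c a \<and> c (q b) \<noteq> c b"
  proof (cases "q a = b")
    case True
    then show ?thesis using qa ab by (auto simp: c_def)
  next
    case False
    then have "q a \<in> S - {a, b}" "q b \<in> S - {a, b}" "(q(q a := q b, q b := q a)) (q b) = q a"
      using qa qb ab by auto
    moreover have "c a = (\<not> c' (q a))" "c b = c' (q a)"
      using False ab by (simp_all add: c_def x_def)
    ultimately show ?thesis
      using c' agree by (metis b_def)
  qed
  moreover have "c b \<noteq> c a"
    using ab by (simp add: c_def)
  ultimately show ?thesis
    using two_colouring_extend[OF p q a c', of c] agree by (auto simp: b_def)
qed

lemma involutions_two_colouring:
  assumes "finite S" and "fpf_involution_on S p" and "fpf_involution_on S q"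
  shows "\<exists>c :: 'a \<Rightarrow> bool. \<forall>h\<in>S. c (p h) \<noteq> c h \<and> c (q h) \<noteq> c h"
  using assms
proof (induction S arbitrary: q rule: finite_psubset_induct)
  case (psubset S)
  show ?case
  proof (cases "S = {}")
    case False
    then obtain a where a: "a \<in> S" by blast
    let ?S' = "S - {a, p a}" and ?q' = "q(q a := q (p a), q (p a) := q a)"
    have pa: "p a \<in> S" "p a \<noteq> a" "p (p a) = a"
      using fpf_involution_onD[OF psubset.prems(1) a] by auto
    have "fpf_involution_on ?S' p"
      using fpf_involution_on_splice[OF psubset.prems(1) a pa(1) pa(2)[symmetric]] pa(3)
      by (simp add: fun_upd_idem)
    moreover have "fpf_involution_on ?S' ?q'"
      using fpf_involution_on_splice[OF psubset.prems(2) a pa(1) pa(2)[symmetric]] .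
    moreover have "?S' \<subset> S" using a by blast
    ultimately obtain c' :: "'a \<Rightarrow> bool" where "\<forall>h\<in>?S'. c' (p h) \<noteq> c' h \<and> c' (?q' h) \<noteq> c' h"
      using psubset.IH[of ?S' ?q'] by blast
    then show ?thesis by (rule two_colouring_splice[OF psubset.prems a])
  qed simp
qed

definition transversal :: "'a set \<Rightarrow> ('a \<Rightarrow> 'a) \<Rightarrow> 'a set \<Rightarrow> bool" where
  "transversal A p I \<longleftrightarrow> I \<subseteq> A \<and> (\<forall>h\<in>A. p h \<in> I \<longleftrightarrow> h \<notin> I)"

lemma transversal_subset_eq:
  assumes "transversal A p I" "transversal A p C" "I \<subseteq> C"
  shows "I = C"
proof
  show "C \<subseteq> I"
  proof
    fix h assume "h \<in> C"
    then have "h \<in> A" "p h \<notin> C" using assms(2) by (auto simp: transversal_def)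
    then show "h \<in> I" using assms(1,3) by (auto simp: transversal_def)
  qed
qed (rule assms(3))

lemma sym_involution_graph:
  assumes "fpf_involution_on A p"
  shows "sym {(h, p h) | h. h \<in> A}"
proof (rule symI)
  fix x y assume "(x, y) \<in> {(h, p h) | h. h \<in> A}"
  then have "x \<in> A" "y = p x" by auto
  then have "y \<in> A" "x = p y" using fpf_involution_onD[OF assms] by auto
  then show "(y, x) \<in> {(h, p h) | h. h \<in> A}" by blast
qed

section \<open>Counting functions invariant along a relation\<close>

lemma sym_rtrancl_Image_eq:
  assumes "sym r" and "(x, y) \<in> r\<^sup>*"
  shows "r\<^sup>*``{x} = r\<^sup>*``{y}"
  using assms(2) sym_rtrancl[OF assms(1)] trans_rtrancl[of r] unfolding sym_def trans_def by blast

lemma rtrancl_invariant: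
  assumes "\<forall>(x, y)\<in>r. t x = t y" and "(x, y) \<in> r\<^sup>*"
  shows "t x = t y"
  using assms(2) by induction (use assms(1) in auto)

lemma invariant_factors_through_quotient:
  assumes t: "t \<in> A \<rightarrow>\<^sub>E B" and inv: "\<forall>(x, y)\<in>r. t x = t y"
  shows "\<exists>g\<in>A // r\<^sup>* \<rightarrow>\<^sub>E B. t = restrict (\<lambda>x. g (r\<^sup>*``{x})) A"
proof -
  define rep where "rep C = (SOME x. x \<in> A \<and> C = r\<^sup>*``{x})" for C
  have rep: "rep C \<in> A \<and> C = r\<^sup>*``{rep C}" if "C \<in> A // r\<^sup>*" for C
    using that unfolding rep_def by (elim quotientE) (rule someI, blast)
  define g where "g = restrict (\<lambda>C. t (rep C)) (A // r\<^sup>*)"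
  have "g \<in> A // r\<^sup>* \<rightarrow>\<^sub>E B"
    using rep t by (auto simp: g_def)
  moreover have "t x = g (r\<^sup>*``{x})" if "x \<in> A" for x
  proof -
    have "r\<^sup>*``{x} \<in> A // r\<^sup>*" using that by (rule quotientI)
    moreover from this have "(rep (r\<^sup>*``{x}), x) \<in> r\<^sup>*"
      using rep by (metis Image_singleton_iff rtrancl.rtrancl_refl)
    ultimately show ?thesis
      using rtrancl_invariant[OF inv] by (simp add: g_def)
  qed
  then have "t = restrict (\<lambda>x. g (r\<^sup>*``{x})) A"
    using t by (auto simp: PiE_def extensional_def)
  ultimately show ?thesis by blast
qed

lemma card_rel_invariant_PiE:
  assumes "finite A" and "r \<subseteq> A \<times> A" and "sym r"
  shows "card {t \<in> A \<rightarrow>\<^sub>E B. \<forall>(x, y)\<in>r. t x = t y} = card B ^ card (A // r\<^sup>*)"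
proof -
  define \<Psi> where "\<Psi> g = restrict (\<lambda>x. g (r\<^sup>*``{x})) A" for g :: "'a set \<Rightarrow> 'b"
  have inj: "inj_on \<Psi> (A // r\<^sup>* \<rightarrow>\<^sub>E B)"
  proof (rule inj_onI)
    fix g g' assume g: "g \<in> A // r\<^sup>* \<rightarrow>\<^sub>E B" and g': "g' \<in> A // r\<^sup>* \<rightarrow>\<^sub>E B" and eq: "\<Psi> g = \<Psi> g'"
    have "g (r\<^sup>*``{x}) = g' (r\<^sup>*``{x})" if "x \<in> A" for x
      using that fun_cong[OF eq, of x] by (simp add: \<Psi>_def)
    then show "g = g'"
      using g g' by (intro PiE_ext) (auto elim: quotientE)
  qed
  have image: "\<Psi> ` (A // r\<^sup>* \<rightarrow>\<^sub>E B) = {t \<in> A \<rightarrow>\<^sub>E B. \<forall>(x, y)\<in>r. t x = t y}"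
  proof (intro equalityI subsetI)
    fix t assume "t \<in> \<Psi> ` (A // r\<^sup>* \<rightarrow>\<^sub>E B)"
    then obtain g where g: "g \<in> A // r\<^sup>* \<rightarrow>\<^sub>E B" and t: "t = \<Psi> g" by blast
    have "t \<in> A \<rightarrow>\<^sub>E B"
      using g by (auto simp: t \<Psi>_def quotientI)
    moreover have "t x = t y" if "(x, y) \<in> r" for x y
      using that assms(2) sym_rtrancl_Image_eq[OF assms(3) r_into_rtrancl[OF that]]
      by (auto simp: t \<Psi>_def)
    ultimately show "t \<in> {t \<in> A \<rightarrow>\<^sub>E B. \<forall>(x, y)\<in>r. t x = t y}" by blast
  next
    fix t assume "t \<in> {t \<in> A \<rightarrow>\<^sub>E B. \<forall>(x, y)\<in>r. t x = t y}"
    then show "t \<in> \<Psi> ` (A // r\<^sup>* \<rightarrow>\<^sub>E B)"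
      unfolding \<Psi>_def using invariant_factors_through_quotient by blast
  qed
  have "finite (A // r\<^sup>*)"
    unfolding quotient_def using assms(1) by blast
  then show ?thesis
    using card_image[OF inj] unfolding image by (simp add: card_PiE)
qed

lemma bij_betw_involution:
  assumes "\<And>x. x \<in> X \<Longrightarrow> g x \<in> X \<and> g (g x) = x" and "Y \<subseteq> X" "Z \<subseteq> X"
    and "\<And>x. x \<in> X \<Longrightarrow> g x \<in> Z \<longleftrightarrow> x \<in> Y"
  shows "bij_betw g Y Z"
proof (rule bij_betw_byWitness[where f' = g])
  show "\<forall>y\<in>Y. g (g y) = y" "\<forall>z\<in>Z. g (g z) = z" "g ` Y \<subseteq> Z"
    using assms by auto
  show "g ` Z \<subseteq> Y"
    using assms by (metis image_subsetI subsetD)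
qed

(* Dualising the values off a common transversal I of p and q turns the conditions
   s (p h) = f (s h) and s (q h) = f (s h) into invariance along p and q. *)
definition twist :: "'a set \<Rightarrow> 'a set \<Rightarrow> ('b \<Rightarrow> 'b) \<Rightarrow> ('a \<Rightarrow> 'b) \<Rightarrow> 'a \<Rightarrow> 'b" where
  "twist A I f s = restrict (\<lambda>h. if h \<in> I then s h else f (s h)) A"

lemma twist_PiE: "f ` B \<subseteq> B \<Longrightarrow> s \<in> A \<rightarrow>\<^sub>E B \<Longrightarrow> twist A I f s \<in> A \<rightarrow>\<^sub>E B"
  by (auto simp: twist_def PiE_iff)

lemma twist_twist: "(\<And>b. f (f b) = b) \<Longrightarrow> s \<in> A \<rightarrow>\<^sub>E B \<Longrightarrow> twist A I f (twist A I f s) = s"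
  by (auto simp: twist_def fun_eq_iff PiE_def extensional_def)

lemma twist_eq_iff:
  assumes "\<And>b. f (f b) = b" and "fpf_involution_on A g" "transversal A g I" "h \<in> A"
  shows "twist A I f s h = twist A I f s (g h) \<longleftrightarrow> s (g h) = f (s h)"
proof (cases "h \<in> I")
  case True
  then show ?thesis using assms fpf_involution_onD[OF assms(2)]
    by (simp add: twist_def transversal_def) (metis assms(1))
next
  case False
  then show ?thesis using assms fpf_involution_onD[OF assms(2)]
    by (auto simp: twist_def transversal_def)
qed

lemma card_twisted_invariant_PiE:
  assumes "finite A"
    and p: "fpf_involution_on A p" "transversal A p I"
    and q: "fpf_involution_on A q" "transversal A q I"
    and f: "f ` B \<subseteq> B" "\<And>b. f (f b) = b"
  shows "card {s \<in> A \<rightarrow>\<^sub>E B. \<forall>h\<in>A. s (p h) = f (s h) \<and> s (q h) = f (s h)}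
    = card B ^ card (A // ({(h, p h) | h. h \<in> A} \<union> {(h, q h) | h. h \<in> A})\<^sup>*)"
proof -
  define r where "r = {(h, p h) | h. h \<in> A} \<union> {(h, q h) | h. h \<in> A}"
  define G where "G = {s \<in> A \<rightarrow>\<^sub>E B. \<forall>h\<in>A. s (p h) = f (s h) \<and> s (q h) = f (s h)}"
  define T where "T = {t \<in> A \<rightarrow>\<^sub>E B. \<forall>(x, y)\<in>r. t x = t y}"
  have r_invariant: "(\<forall>(x, y)\<in>r. t x = t y) \<longleftrightarrow> (\<forall>h\<in>A. t h = t (p h) \<and> t h = t (q h))"
    for t :: "'a \<Rightarrow> 'b"
    by (auto simp: r_def)
  have "bij_betw (twist A I f) G T"
  proof (rule bij_betw_involution[where X = "A \<rightarrow>\<^sub>E B"])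
    show "twist A I f s \<in> A \<rightarrow>\<^sub>E B \<and> twist A I f (twist A I f s) = s" if "s \<in> A \<rightarrow>\<^sub>E B" for s
      using twist_PiE[OF f(1) that] twist_twist[OF f(2) that] by blast
    show "twist A I f s \<in> T \<longleftrightarrow> s \<in> G" if "s \<in> A \<rightarrow>\<^sub>E B" for s
      using that twist_PiE[OF f(1) that] twist_eq_iff[OF f(2) p] twist_eq_iff[OF f(2) q]
      unfolding T_def G_def r_invariant by auto
  qed (auto simp: G_def T_def)
  then have "card G = card T"
    by (rule bij_betw_same_card)
  also have "\<dots> = card B ^ card (A // r\<^sup>*)"
    unfolding T_def
  proof (rule card_rel_invariant_PiE[OF \<open>finite A\<close>])
    show "r \<subseteq> A \<times> A"
      using fpf_involution_onD[OF p(1)] fpf_involution_onD[OF q(1)] by (auto simp: r_def)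
    show "sym r"
      unfolding r_def by (intro sym_Un sym_involution_graph p(1) q(1))
  qed
  finally show ?thesis
    unfolding G_def r_def .
qed

section \<open>Edge structures and orientations of pairings\<close>

lemma edge_structureD:
  "edge_structure N E \<Longrightarrow> (a, b) \<in> E \<Longrightarrow> a < N \<and> b < N \<and> a \<noteq> b"
  unfolding edge_structure_def by blast

lemma edge_structure_unique:
  assumes "edge_structure N E" and "e \<in> E" "e' \<in> E"
    and "fst e = h \<or> snd e = h" "fst e' = h \<or> snd e' = h"
  shows "e = e'"
proof -
  have "h < N" using assms(2,4) edge_structureD[OF assms(1), of "fst e" "snd e"] by auto
  then show ?thesis using assms unfolding edge_structure_def by blast
qed

lemma edge_structure_finite:
  assumes "edge_structure N E"
  shows "finite E"
proof (rule finite_subset)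
  show "E \<subseteq> {..<N} \<times> {..<N}"
  proof (rule subrelI)
    fix a b assume "(a, b) \<in> E"
    then show "(a, b) \<in> {..<N} \<times> {..<N}" using edge_structureD[OF assms] by simp
  qed
qed simp

lemma edge_structure_swap_notin:
  assumes "edge_structure N E" and "(a, b) \<in> E"
  shows "(b, a) \<notin> E"
proof
  assume "(b, a) \<in> E"
  then have "(b, a) = (a, b)" using edge_structure_unique[OF assms(1) _ assms(2), of _ a] by simp
  then show False using edge_structureD[OF assms] by simp
qed

lemma edge_structure_image_swap:
  assumes "edge_structure N E" and "\<And>e. e \<in> E \<Longrightarrow> g e = e \<or> g e = prod.swap e"
  shows "edge_structure N (g ` E)"
  unfolding edge_structure_def
proof (intro conjI ballI allI impI)
  fix x assume "x \<in> g ` E"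
  then obtain a b where ab: "(a, b) \<in> E" "x = g (a, b)" by auto
  then have "x = (a, b) \<or> x = (b, a)" using assms(2)[OF ab(1)] by auto
  then show "case x of (a, b) \<Rightarrow> a < N \<and> b < N \<and> a \<noteq> b"
    using edge_structureD[OF assms(1) ab(1)] by auto
next
  fix h assume "h < N"
  then obtain e where e: "e \<in> E" "fst e = h \<or> snd e = h"
    using assms(1) unfolding edge_structure_def by blast
  have incident: "fst (g e') = h \<or> snd (g e') = h \<longleftrightarrow> fst e' = h \<or> snd e' = h" if "e' \<in> E" for e'
    using assms(2)[OF that] by auto
  show "\<exists>!e'. e' \<in> g ` E \<and> (fst e' = h \<or> snd e' = h)"
  proof (rule ex1I[of _ "g e"])
    show "g e \<in> g ` E \<and> (fst (g e) = h \<or> snd (g e) = h)" using e incident by blast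
    fix e' assume "e' \<in> g ` E \<and> (fst e' = h \<or> snd e' = h)"
    then obtain e'' where "e'' \<in> E" "e' = g e''" "fst e'' = h \<or> snd e'' = h"
      using incident by blast
    then show "e' = g e" using edge_structure_unique[OF assms(1) _ e(1) _ e(2)] by blast
  qed
qed

lemma reverse_edges_image:
  "R \<subseteq> E \<Longrightarrow> reverse_edges R E = (\<lambda>e. if e \<in> R then prod.swap e else e) ` E"
  unfolding reverse_edges_def by (auto simp: image_iff)

lemma edge_structure_reverse_edges:
  "edge_structure N E \<Longrightarrow> R \<subseteq> E \<Longrightarrow> edge_structure N (reverse_edges R E)"
  unfolding reverse_edges_image by (rule edge_structure_image_swap) auto

lemma fst_reverse_edges:
  "R \<subseteq> E \<Longrightarrow> fst ` reverse_edges R E = (\<lambda>e. if e \<in> R then snd e else fst e) ` E"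
  unfolding reverse_edges_image image_image by (intro image_cong) auto

lemma partner_eqI:
  assumes "edge_structure N E" and "(h, b) \<in> E \<or> (b, h) \<in> E"
  shows "partner E h = b"
  unfolding partner_def
proof (rule the_equality)
  fix b' assume "(h, b') \<in> E \<or> (b', h) \<in> E"
  then show "b' = b"
    using assms edge_structure_unique[OF assms(1), of _ _ h] by fastforce
qed (rule assms(2))

lemma partner_edge:
  assumes "edge_structure N E" and "h < N"
  shows "(h, partner E h) \<in> E \<or> (partner E h, h) \<in> E"
proof -
  obtain e where "e \<in> E" "fst e = h \<or> snd e = h"
    using assms unfolding edge_structure_def by blast
  then obtain b where "(h, b) \<in> E \<or> (b, h) \<in> E" by (cases e) auto
  then show ?thesis using partner_eqI[OF assms(1)] by metis
qed

lemma partner_involution: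
  assumes "edge_structure N E" and "h < N"
  shows "partner E h < N" "partner E h \<noteq> h" "partner E (partner E h) = h"
proof -
  have e: "(h, partner E h) \<in> E \<or> (partner E h, h) \<in> E"
    by (rule partner_edge[OF assms])
  then show "partner E h < N" "partner E h \<noteq> h"
    using edge_structureD[OF assms(1), of h "partner E h"]
      edge_structureD[OF assms(1), of "partner E h" h] by auto
  show "partner E (partner E h) = h"
    using partner_eqI[OF assms(1), of "partner E h" h] e by blast
qed

lemma fpf_involution_on_partner:
  "edge_structure N E \<Longrightarrow> fpf_involution_on {..<N} (partner E)"
  unfolding fpf_involution_on_def using partner_involution by blast

lemma edge_choice_inj:
  assumes "edge_structure N E" and "\<And>e. e \<in> E \<Longrightarrow> g e = fst e \<or> g e = snd e"
  shows "inj_on g E"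
proof (rule inj_onI)
  fix e e' assume "e \<in> E" "e' \<in> E" "g e = g e'"
  then show "e = e'"
    using edge_structure_unique[OF assms(1), of e e' "g e"] assms(2) by metis
qed

lemma edge_choice_transversal:
  assumes es: "edge_structure N E" and g: "\<And>e. e \<in> E \<Longrightarrow> g e = fst e \<or> g e = snd e"
  shows "transversal {..<N} (partner E) (g ` E)"
  unfolding transversal_def
proof (intro conjI ballI)
  show "g ` E \<subseteq> {..<N}"
  proof
    fix x assume "x \<in> g ` E"
    then obtain e where e: "e \<in> E" "x = g e" by blast
    then obtain a b where "(a, b) \<in> E" "x = a \<or> x = b"
      using g[OF e(1)] by (cases e) auto
    then show "x \<in> {..<N}" using edge_structureD[OF es] by auto
  qed
  fix h assume "h \<in> {..<N}"
  then have h: "h < N" by simp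
  have "(h, partner E h) \<in> E \<or> (partner E h, h) \<in> E"
    by (rule partner_edge[OF es h])
  then obtain e where e: "e \<in> E"
    "fst e = h \<and> snd e = partner E h \<or> fst e = partner E h \<and> snd e = h"
    by (metis fst_conv snd_conv)
  have mem: "x \<in> g ` E \<longleftrightarrow> g e = x" if x: "x = h \<or> x = partner E h" for x
  proof
    assume "x \<in> g ` E"
    then obtain e' where e': "e' \<in> E" "x = g e'" by blast
    have "fst e' = x \<or> snd e' = x" using g[OF e'(1)] e'(2) by auto
    moreover have "fst e = x \<or> snd e = x" using e(2) x by auto
    ultimately have "e' = e" by (rule edge_structure_unique[OF es e'(1) e(1)])
    then show "g e = x" using e'(2) by simp
  qed (use e(1) in blast)
  have "g e = h \<or> g e = partner E h" "partner E h \<noteq> h"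
    using g[OF e(1)] e(2) partner_involution[OF es h] by auto
  then show "partner E h \<in> g ` E \<longleftrightarrow> h \<notin> g ` E"
    using mem[OF disjI1[OF refl]] mem[OF disjI2[OF refl]] by metis
qed

lemma initial_half_edges_transversal:
  assumes es: "edge_structure N E" and R: "R \<subseteq> E"
  shows "transversal {..<N} (partner E) (fst ` reverse_edges R E)"
  unfolding fst_reverse_edges[OF R] by (rule edge_choice_transversal[OF es]) simp

lemma pairingsD:
  "\<pi> \<in> pairings N \<Longrightarrow> h < N \<Longrightarrow> \<pi> h < N \<and> \<pi> h \<noteq> h \<and> \<pi> (\<pi> h) = h"
  unfolding pairings_def by auto

lemma fpf_involution_on_pairing: "\<pi> \<in> pairings N \<Longrightarrow> fpf_involution_on {..<N} \<pi>"
  unfolding fpf_involution_on_def using pairingsD by blast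

definition pairing_orientation :: "(nat \<Rightarrow> nat) \<Rightarrow> nat set \<Rightarrow> (nat \<times> nat) set" where
  "pairing_orientation \<pi> I = (\<lambda>a. (a, \<pi> a)) ` I"

lemma edge_structure_pairing_orientation:
  assumes \<pi>: "\<pi> \<in> pairings N" and I: "transversal {..<N} \<pi> I"
  shows "edge_structure N (pairing_orientation \<pi> I)"
  unfolding edge_structure_def
proof (intro conjI ballI allI impI)
  fix x assume "x \<in> pairing_orientation \<pi> I"
  then obtain a where "a \<in> I" "x = (a, \<pi> a)" by (auto simp: pairing_orientation_def)
  then show "case x of (a, b) \<Rightarrow> a < N \<and> b < N \<and> a \<noteq> b"
    using I pairingsD[OF \<pi>, of a] by (auto simp: transversal_def)
next
  fix h assume h: "h < N"
  have \<pi>h: "\<pi> h < N" "\<pi> (\<pi> h) = h" "\<pi> h \<in> I \<longleftrightarrow> h \<notin> I"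
    using pairingsD[OF \<pi> h] I h by (auto simp: transversal_def)
  define e where "e = (if h \<in> I then (h, \<pi> h) else (\<pi> h, h))"
  show "\<exists>!e. e \<in> pairing_orientation \<pi> I \<and> (fst e = h \<or> snd e = h)"
  proof (rule ex1I[of _ e])
    show "e \<in> pairing_orientation \<pi> I \<and> (fst e = h \<or> snd e = h)"
      using \<pi>h unfolding e_def pairing_orientation_def
      by (cases "h \<in> I") (auto intro: image_eqI[of _ _ "\<pi> h"])
    fix e' assume "e' \<in> pairing_orientation \<pi> I \<and> (fst e' = h \<or> snd e' = h)"
    then obtain a where a: "a \<in> I" "e' = (a, \<pi> a)" "a = h \<or> \<pi> a = h"
      by (auto simp: pairing_orientation_def)
    then have "a = h \<or> a = \<pi> h"
      using pairingsD[OF \<pi>] I by (auto simp: transversal_def)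
    then show "e' = e"
      using a \<pi>h by (auto simp: e_def)
  qed
qed

lemma pairing_orientation_reverse:
  assumes \<pi>: "\<pi> \<in> pairings N" and I: "transversal {..<N} \<pi> I" and J: "transversal {..<N} \<pi> J"
  shows "pairing_orientation \<pi> J
    = reverse_edges (pairing_orientation \<pi> (I - J)) (pairing_orientation \<pi> I)"
proof -
  have swap: "\<pi> a < N \<and> \<pi> (\<pi> a) = a \<and> (\<pi> a \<in> I \<longleftrightarrow> a \<notin> I) \<and> (\<pi> a \<in> J \<longleftrightarrow> a \<notin> J)"
    if "a < N" for a
    using pairingsD[OF \<pi> that] that I J by (auto simp: transversal_def)
  have IJ: "a < N" if "a \<in> I \<or> a \<in> J" for a
    using that I J by (auto simp: transversal_def)
  show ?thesis
    unfolding reverse_edges_def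
  proof (intro equalityI subsetI)
    fix x assume "x \<in> pairing_orientation \<pi> J"
    then obtain a where a: "a \<in> J" "x = (a, \<pi> a)" by (auto simp: pairing_orientation_def)
    show "x \<in> pairing_orientation \<pi> I - pairing_orientation \<pi> (I - J)
      \<union> prod.swap ` pairing_orientation \<pi> (I - J)"
    proof (cases "a \<in> I")
      case True
      then show ?thesis using a by (auto simp: pairing_orientation_def)
    next
      case False
      then have "\<pi> a \<in> I - J" "x = prod.swap (\<pi> a, \<pi> (\<pi> a))"
        using a swap IJ by auto
      then show ?thesis unfolding pairing_orientation_def by blast
    qed
  next
    fix x assume "x \<in> pairing_orientation \<pi> I - pairing_orientation \<pi> (I - J)
      \<union> prod.swap ` pairing_orientation \<pi> (I - J)"
    then consider a where "a \<in> I \<inter> J" "x = (a, \<pi> a)" | a where "a \<in> I - J" "x = (\<pi> a, a)"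
      unfolding pairing_orientation_def by auto
    then show "x \<in> pairing_orientation \<pi> J"
    proof cases
      case (2 a)
      then have "\<pi> a \<in> J" "x = (\<pi> a, \<pi> (\<pi> a))" using swap IJ by auto
      then show ?thesis unfolding pairing_orientation_def by blast
    qed (auto simp: pairing_orientation_def)
  qed
qed

lemma pairing_edges_min_orientation:
  "pairing_edges_min N \<pi> = pairing_orientation \<pi> {a. a < N \<and> a < \<pi> a}"
  unfolding pairing_edges_min_def pairing_orientation_def by blast

lemma transversal_less:
  assumes "\<pi> \<in> pairings N"
  shows "transversal {..<N} \<pi> {a. a < N \<and> a < \<pi> a}"
  unfolding transversal_def
  using pairingsD[OF assms]
  by (metis (mono_tags) lessThan_iff mem_Collect_eq not_less_iff_gr_or_eq subsetI)

lemma induced_edges_orientation: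
  "induced_edges N E \<pi> = pairing_orientation \<pi> ({..<N} \<inter> fst ` E)"
  unfolding induced_edges_def pairing_orientation_def by blast

lemma coherent_iff_transversal:
  "fst ` E \<subseteq> {..<N} \<Longrightarrow> coherent N E \<pi> \<longleftrightarrow> transversal {..<N} \<pi> (fst ` E)"
  unfolding coherent_def transversal_def by blast

lemma coherent_initial_half_edges:
  assumes "edge_structure N E" and "R \<subseteq> E" and "coherent N (reverse_edges R E) \<pi>"
  shows "transversal {..<N} \<pi> (fst ` reverse_edges R E)"
  using assms(3) initial_half_edges_transversal[OF assms(1,2)] coherent_iff_transversal
  by (simp add: transversal_def)

lemma induced_edges_reverse_edges:
  assumes "edge_structure N E" and "R \<subseteq> E"
  shows "induced_edges N (reverse_edges R E) \<pi> = pairing_orientation \<pi> (fst ` reverse_edges R E)"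
  using initial_half_edges_transversal[OF assms]
  by (simp add: induced_edges_orientation transversal_def Int_absorb1)

lemma colouring_reversal_initial_half_edges:
  assumes es: "edge_structure N E" and c: "\<And>h. h < N \<Longrightarrow> c (partner E h) \<noteq> c h"
  shows "fst ` reverse_edges {e \<in> E. \<not> c (fst e)} E = {h. h < N \<and> c h}"
proof (rule transversal_subset_eq)
  show "transversal {..<N} (partner E) (fst ` reverse_edges {e \<in> E. \<not> c (fst e)} E)"
    by (rule initial_half_edges_transversal[OF es]) blast
  show "transversal {..<N} (partner E) {h. h < N \<and> c h}"
    unfolding transversal_def using c partner_involution(1)[OF es] by auto
  show "fst ` reverse_edges {e \<in> E. \<not> c (fst e)} E \<subseteq> {h. h < N \<and> c h}"
  proof
    fix x assume "x \<in> fst ` reverse_edges {e \<in> E. \<not> c (fst e)} E"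
    then obtain e where e: "e \<in> E" "x = (if \<not> c (fst e) then snd e else fst e)"
      unfolding fst_reverse_edges[OF Collect_subset] by auto
    obtain a b where ab: "e = (a, b)" by (cases e)
    have "a < N" "b < N" "partner E a = b"
      using edge_structureD[OF es] partner_eqI[OF es] e(1) ab by auto
    then show "x \<in> {h. h < N \<and> c h}" using e ab c[of a] by (cases "c a") auto
  qed
qed

lemma coherent_reversal_spec:
  assumes es: "edge_structure (og_nhe X) (og_edges X)" and \<pi>: "\<pi> \<in> pairings (og_nhe X)"
  shows "coherent_reversal X \<pi> \<subseteq> og_edges X
    \<and> coherent (og_nhe X) (reverse_edges (coherent_reversal X \<pi>) (og_edges X)) \<pi>"
proof -
  let ?N = "og_nhe X" and ?E = "og_edges X"
  have "\<exists>c :: nat \<Rightarrow> bool. \<forall>h\<in>{..<?N}. c (partner ?E h) \<noteq> c h \<and> c (\<pi> h) \<noteq> c h"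
    using fpf_involution_on_partner[OF es] fpf_involution_on_pairing[OF \<pi>]
    by (intro involutions_two_colouring) simp_all
  then obtain c :: "nat \<Rightarrow> bool" where c: "\<And>h. h < ?N \<Longrightarrow> c (partner ?E h) \<noteq> c h \<and> c (\<pi> h) \<noteq> c h"
    by (metis lessThan_iff)
  define R where "R = {e \<in> ?E. \<not> c (fst e)}"
  have "fst ` reverse_edges R ?E = {h. h < ?N \<and> c h}"
    unfolding R_def using c by (intro colouring_reversal_initial_half_edges[OF es]) blast
  moreover have "transversal {..<?N} \<pi> {h. h < ?N \<and> c h}"
    unfolding transversal_def using c pairingsD[OF \<pi>] by auto
  ultimately have "coherent ?N (reverse_edges R ?E) \<pi>"
    using coherent_iff_transversal[of "reverse_edges R ?E" ?N \<pi>] by (simp add: subset_eq)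
  moreover have "R \<subseteq> ?E" by (auto simp: R_def)
  ultimately have "R \<subseteq> ?E \<and> coherent ?N (reverse_edges R ?E) \<pi>" by blast
  then show ?thesis
    unfolding coherent_reversal_def by (rule someI)
qed

section \<open>Symplectic weights and states\<close>

definition symplectic_weight :: "(nat \<Rightarrow> nat \<times> bool) \<Rightarrow> (nat \<times> nat) set \<Rightarrow> real" where
  "symplectic_weight s D = (\<Prod>(a, b)\<in>D. omega (s a) (s b))"

lemma omega_antisym: "omega y x = - omega x y"
  by (auto simp: omega_def)

lemma symplectic_weight_reverse_edge:
  assumes "edge_structure N D" and "(a, b) \<in> D"
  shows "symplectic_weight s (D - {(a, b)} \<union> {(b, a)}) = - symplectic_weight s D"
proof -
  have fin: "finite D" by (rule edge_structure_finite[OF assms(1)])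
  have "(b, a) \<notin> D - {(a, b)}" using edge_structure_swap_notin[OF assms] by simp
  then have "symplectic_weight s (D - {(a, b)} \<union> {(b, a)})
      = omega (s b) (s a) * symplectic_weight s (D - {(a, b)})"
    using fin by (simp add: symplectic_weight_def)
  moreover have "symplectic_weight s D = omega (s a) (s b) * symplectic_weight s (D - {(a, b)})"
    unfolding symplectic_weight_def by (subst prod.remove[OF fin assms(2)]) simp
  ultimately show ?thesis by (simp add: omega_antisym[of "s a" "s b"])
qed

lemma symplectic_weight_pairing_orientation:
  "symplectic_weight s (pairing_orientation \<pi> I) = (\<Prod>a\<in>I. omega (s a) (s (\<pi> a)))"
  unfolding symplectic_weight_def pairing_orientation_def
  by (subst prod.reindex) (auto simp: inj_on_def)

lemma respects_OG_reverse_edge: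
  "respects_OG Op act F \<Longrightarrow> valid_ograph Op G \<Longrightarrow> e \<in> og_edges G \<Longrightarrow> F (reverse_edge e G) = - F G"
  unfolding respects_OG_def by blast

lemma valid_ograph_edges:
  "valid_ograph Op X \<Longrightarrow> valid_ograph Op (X\<lparr>og_edges := E\<rparr>) \<longleftrightarrow> edge_structure (og_nhe X) E"
  by (simp add: valid_ograph_def og_deg_def)

(* Reversing one edge negates the omega-weight, and F by the orientation relation of OG. *)
lemma weighted_value_reverse_edges:
  assumes X: "valid_ograph Op X" and F: "respects_OG Op act F"
    and D: "edge_structure (og_nhe X) D" and "finite Q" "Q \<subseteq> D"
  shows "symplectic_weight s (reverse_edges Q D) *\<^sub>R F (X\<lparr>og_edges := reverse_edges Q D\<rparr>)
    = symplectic_weight s D *\<^sub>R F (X\<lparr>og_edges := D\<rparr>)"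
  using \<open>finite Q\<close> \<open>Q \<subseteq> D\<close>
proof (induction Q rule: finite_induct)
  case empty
  then show ?case by (simp add: reverse_edges_def)
next
  case (insert e Q)
  obtain a b where e: "e = (a, b)" by (cases e)
  define D0 where "D0 = reverse_edges Q D"
  have D0: "edge_structure (og_nhe X) D0"
    unfolding D0_def using insert.prems by (intro edge_structure_reverse_edges[OF D]) simp
  have "(b, a) \<notin> D" using edge_structure_swap_notin[OF D] insert.prems e by simp
  then have e_D0: "(a, b) \<in> D0"
    and rev_insert: "reverse_edges (insert e Q) D = D0 - {(a, b)} \<union> {(b, a)}"
    using insert.prems insert.hyps(2) e unfolding D0_def reverse_edges_def by auto
  have "F (X\<lparr>og_edges := reverse_edges (insert e Q) D\<rparr>) = - F (X\<lparr>og_edges := D0\<rparr>)"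
  proof -
    have "valid_ograph Op (X\<lparr>og_edges := D0\<rparr>)" using valid_ograph_edges[OF X] D0 by simp
    then have "F (reverse_edge (a, b) (X\<lparr>og_edges := D0\<rparr>)) = - F (X\<lparr>og_edges := D0\<rparr>)"
      using respects_OG_reverse_edge[OF F] e_D0 by simp
    then show ?thesis by (simp add: reverse_edge_def rev_insert)
  qed
  moreover have "symplectic_weight s (reverse_edges (insert e Q) D) = - symplectic_weight s D0"
    unfolding rev_insert by (rule symplectic_weight_reverse_edge[OF D0 e_D0])
  ultimately show ?case
    using insert.IH insert.prems by (simp add: D0_def)
qed

lemma weighted_value_orientation_invariant:
  assumes X: "valid_ograph Op X" and F: "respects_OG Op act F" and \<pi>: "\<pi> \<in> pairings (og_nhe X)"
    and I: "transversal {..<og_nhe X} \<pi> I" and J: "transversal {..<og_nhe X} \<pi> J"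
  shows "symplectic_weight s (pairing_orientation \<pi> J)
      *\<^sub>R F (X\<lparr>og_edges := pairing_orientation \<pi> J\<rparr>)
    = symplectic_weight s (pairing_orientation \<pi> I)
      *\<^sub>R F (X\<lparr>og_edges := pairing_orientation \<pi> I\<rparr>)"
proof -
  have "finite I" using I by (auto simp: transversal_def intro: finite_subset)
  then show ?thesis
    unfolding pairing_orientation_reverse[OF \<pi> I J]
    using edge_structure_pairing_orientation[OF \<pi> I]
    by (intro weighted_value_reverse_edges[OF X F]) (auto simp: pairing_orientation_def)
qed

definition pq_dual :: "nat \<times> bool \<Rightarrow> nat \<times> bool" where
  "pq_dual x = (fst x, \<not> snd x)"

definition pq_sign :: "nat \<times> bool \<Rightarrow> real" where
  "pq_sign x = (if snd x then 1 else -1)"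

lemma pq_dual_dual [simp]: "pq_dual (pq_dual x) = x"
  by (simp add: pq_dual_def)

lemma pq_dual_sbasis: "x \<in> sbasis n \<Longrightarrow> pq_dual x \<in> sbasis n"
  by (auto simp: sbasis_def pq_dual_def)

lemma card_sbasis: "card (sbasis n) = 2 * n"
  by (simp add: sbasis_def card_cartesian_product)

lemma pq_sign_dual: "pq_sign (pq_dual x) = - pq_sign x"
  by (simp add: pq_sign_def pq_dual_def)

lemma pq_sign_square: "pq_sign x * pq_sign x = 1"
  by (simp add: pq_sign_def)

lemma omega_eq: "omega x y = (if y = pq_dual x then pq_sign x else 0)"
  by (cases x; cases y) (auto simp: omega_def pq_dual_def pq_sign_def)

lemma state_sign_eq: "state_sign X s = (\<Prod>e\<in>og_edges X. pq_sign (s (fst e)))"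
  unfolding state_sign_def pq_sign_def by (simp add: case_prod_beta)

lemma state_sign_square: "state_sign X s * state_sign X s = 1"
  unfolding state_sign_eq prod.distrib[symmetric] by (simp add: pq_sign_square)

lemma pq_pair_iff:
  "x \<in> sbasis n \<Longrightarrow> (\<exists>i<n. (x = (i, True) \<and> y = (i, False)) \<or> (x = (i, False) \<and> y = (i, True)))
    \<longleftrightarrow> y = pq_dual x"
  by (cases x; cases y) (auto simp: sbasis_def pq_dual_def)

lemma edgewise_iff_partner:
  assumes es: "edge_structure N E" and f: "\<And>x. f (f x) = x"
  shows "(\<forall>(a, b)\<in>E. s b = f (s a)) \<longleftrightarrow> (\<forall>h<N. s (partner E h) = f (s h))"
proof
  assume "\<forall>(a, b)\<in>E. s b = f (s a)"
  then show "\<forall>h<N. s (partner E h) = f (s h)"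
    using partner_edge[OF es] by (metis (mono_tags) case_prodD f)
next
  assume partner: "\<forall>h<N. s (partner E h) = f (s h)"
  show "\<forall>(a, b)\<in>E. s b = f (s a)"
  proof clarify
    fix a b assume "(a, b) \<in> E"
    then have "a < N" "partner E a = b" using edge_structureD[OF es] partner_eqI[OF es] by auto
    then show "s b = f (s a)" using partner by auto
  qed
qed

lemma states_eq:
  assumes es: "edge_structure (og_nhe X) (og_edges X)"
  shows "states n X = {s \<in> {..<og_nhe X} \<rightarrow>\<^sub>E sbasis n.
    \<forall>h<og_nhe X. s (partner (og_edges X) h) = pq_dual (s h)}"
  unfolding states_def edgewise_iff_partner[OF es pq_dual_dual, symmetric]
proof (intro Collect_cong conj_cong refl ball_cong)
  fix s e assume "s \<in> {..<og_nhe X} \<rightarrow>\<^sub>E sbasis n" "e \<in> og_edges X"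
  then have "s (fst e) \<in> sbasis n"
    using edge_structureD[OF es, of "fst e" "snd e"] by auto
  then show "(case e of (a, b) \<Rightarrow>
      \<exists>i<n. (s a = (i, True) \<and> s b = (i, False)) \<or> (s a = (i, False) \<and> s b = (i, True)))
    \<longleftrightarrow> (case e of (a, b) \<Rightarrow> s b = pq_dual (s a))"
    using pq_pair_iff by (simp add: case_prod_beta)
qed

lemma prod_pq_sign_reverse_edges:
  assumes es: "edge_structure N E" and R: "R \<subseteq> E"
    and dual: "\<And>h. h < N \<Longrightarrow> s (partner E h) = pq_dual (s h)"
  shows "(\<Prod>a\<in>fst ` reverse_edges R E. pq_sign (s a))
    = (-1) ^ card R * (\<Prod>e\<in>E. pq_sign (s (fst e)))"
proof -
  define g where "g e = (if e \<in> R then snd e else fst e)" for e :: "nat \<times> nat"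
  have fin: "finite E" by (rule edge_structure_finite[OF es])
  have "inj_on g E"
    by (rule edge_choice_inj[OF es]) (simp add: g_def)
  then have "(\<Prod>a\<in>fst ` reverse_edges R E. pq_sign (s a)) = (\<Prod>e\<in>E. pq_sign (s (g e)))"
    unfolding fst_reverse_edges[OF R] g_def[symmetric] by (simp add: prod.reindex)
  also have "\<dots> = (\<Prod>e\<in>E. (if e \<in> R then -1 else 1) * pq_sign (s (fst e)))"
  proof (rule prod.cong[OF refl])
    fix e assume "e \<in> E"
    moreover obtain a b where "e = (a, b)" by (cases e)
    ultimately have "a < N" "partner E a = b"
      using edge_structureD[OF es] partner_eqI[OF es] by auto
    then show "pq_sign (s (g e)) = (if e \<in> R then -1 else 1) * pq_sign (s (fst e))"
      using dual \<open>e = (a, b)\<close> by (auto simp: g_def pq_sign_dual)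
  qed
  also have "\<dots> = (-1) ^ card R * (\<Prod>e\<in>E. pq_sign (s (fst e)))"
    using fin R by (simp add: prod.distrib prod.If_cases Int_absorb1)
  finally show ?thesis .
qed

lemma orientation_weight_vanishes:
  assumes \<pi>: "\<pi> \<in> pairings N" and I: "transversal {..<N} \<pi> I"
    and h: "h < N" "s (\<pi> h) \<noteq> pq_dual (s h)"
  shows "symplectic_weight s (pairing_orientation \<pi> I) = 0"
proof -
  have "\<exists>a\<in>I. omega (s a) (s (\<pi> a)) = 0"
  proof (cases "h \<in> I")
    case True
    then show ?thesis using h by (auto simp: omega_eq)
  next
    case False
    then have "\<pi> h \<in> I" using I h(1) by (simp add: transversal_def)
    moreover have "s (\<pi> (\<pi> h)) \<noteq> pq_dual (s (\<pi> h))"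
      using h pairingsD[OF \<pi> h(1)] by (metis pq_dual_dual)
    ultimately show ?thesis by (auto simp: omega_eq)
  qed
  moreover have "finite I"
    using I by (auto simp: transversal_def intro: finite_subset)
  ultimately show ?thesis
    by (simp add: symplectic_weight_pairing_orientation prod_zero)
qed

lemma orientation_weight_dual:
  assumes "I \<subseteq> {..<N}" and "\<forall>h<N. s (\<pi> h) = pq_dual (s h)"
  shows "symplectic_weight s (pairing_orientation \<pi> I) = (\<Prod>a\<in>I. pq_sign (s a))"
  unfolding symplectic_weight_pairing_orientation
  using assms by (intro prod.cong) (auto simp: omega_eq)

lemma card_dual_states:
  assumes es: "edge_structure N E" and \<pi>: "\<pi> \<in> pairings N"
    and I: "transversal {..<N} (partner E) I" "transversal {..<N} \<pi> I"
  shows "card {s \<in> {..<N} \<rightarrow>\<^sub>E sbasis n.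
      \<forall>h\<in>{..<N}. s (partner E h) = pq_dual (s h) \<and> s (\<pi> h) = pq_dual (s h)}
    = (2 * n) ^ num_circles N E \<pi>"
  unfolding num_circles_def card_sbasis[symmetric]
  using card_twisted_invariant_PiE[OF _ fpf_involution_on_partner[OF es] I(1)
      fpf_involution_on_pairing[OF \<pi>] I(2), where B = "sbasis n" and f = pq_dual]
    pq_dual_sbasis by (simp add: image_subset_iff)

lemma state_sign_times_weight:
  assumes es: "edge_structure (og_nhe X) (og_edges X)" and R: "R \<subseteq> og_edges X"
    and dual: "\<forall>h<og_nhe X. s (partner (og_edges X) h) = pq_dual (s h)"
      "\<forall>h<og_nhe X. s (\<pi> h) = pq_dual (s h)"
  shows "state_sign X s
      * symplectic_weight s (pairing_orientation \<pi> (fst ` reverse_edges R (og_edges X)))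
    = (-1) ^ card R"
proof -
  have "symplectic_weight s (pairing_orientation \<pi> (fst ` reverse_edges R (og_edges X)))
      = (\<Prod>a\<in>fst ` reverse_edges R (og_edges X). pq_sign (s a))"
    using orientation_weight_dual[OF _ dual(2)] initial_half_edges_transversal[OF es R]
    by (simp add: transversal_def)
  also have "\<dots> = (-1) ^ card R * state_sign X s"
    unfolding state_sign_eq using dual(1) by (intro prod_pq_sign_reverse_edges[OF es R]) auto
  finally show ?thesis
    using state_sign_square[of X s] by (simp add: algebra_simps)
qed

lemma sum_state_sign_weight:
  assumes es: "edge_structure (og_nhe X) (og_edges X)" and \<pi>: "\<pi> \<in> pairings (og_nhe X)"
    and R: "R \<subseteq> og_edges X" and coh: "coherent (og_nhe X) (reverse_edges R (og_edges X)) \<pi>"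
  shows "(\<Sum>s\<in>states n X. state_sign X s
      * symplectic_weight s (induced_edges (og_nhe X) (reverse_edges R (og_edges X)) \<pi>))
    = (-1) ^ card R * (2 * real n) ^ num_circles (og_nhe X) (og_edges X) \<pi>"
proof -
  define N where "N = og_nhe X"
  define E where "E = og_edges X"
  define I where "I = fst ` reverse_edges R E"
  define G where "G = {s \<in> {..<N} \<rightarrow>\<^sub>E sbasis n.
    \<forall>h\<in>{..<N}. s (partner E h) = pq_dual (s h) \<and> s (\<pi> h) = pq_dual (s h)}"
  have es': "edge_structure N E" and \<pi>': "\<pi> \<in> pairings N" and R': "R \<subseteq> E"
    using es \<pi> R by (simp_all add: N_def E_def)
  have I: "transversal {..<N} (partner E) I" "transversal {..<N} \<pi> I"
    unfolding I_def using initial_half_edges_transversal[OF es' R']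
      coherent_initial_half_edges[OF es' R'] coh by (simp_all add: N_def E_def)
  have D: "induced_edges N (reverse_edges R E) \<pi> = pairing_orientation \<pi> I"
    unfolding I_def by (rule induced_edges_reverse_edges[OF es' R'])
  have states: "states n X = {s \<in> {..<N} \<rightarrow>\<^sub>E sbasis n. \<forall>h<N. s (partner E h) = pq_dual (s h)}"
    using states_eq[OF es] by (simp add: N_def E_def)
  have "finite (states n X)"
    unfolding states
    by (rule finite_subset[of _ "{..<N} \<rightarrow>\<^sub>E sbasis n"]) (auto simp: sbasis_def intro!: finite_PiE)
  moreover have "G \<subseteq> states n X"
    unfolding states G_def by auto
  moreover have "symplectic_weight s (pairing_orientation \<pi> I) = 0" if "s \<in> states n X - G" for s
  proof -
    have "s \<in> {..<N} \<rightarrow>\<^sub>E sbasis n" "\<forall>h<N. s (partner E h) = pq_dual (s h)" "s \<notin> G"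
      using that by (simp_all add: states)
    then obtain h where "h < N" "s (\<pi> h) \<noteq> pq_dual (s h)"
      unfolding G_def by auto
    then show ?thesis by (rule orientation_weight_vanishes[OF \<pi>' I(2)])
  qed
  ultimately have "(\<Sum>s\<in>states n X. state_sign X s * symplectic_weight s (pairing_orientation \<pi> I))
      = (\<Sum>s\<in>G. state_sign X s * symplectic_weight s (pairing_orientation \<pi> I))"
    by (intro sum.mono_neutral_right) auto
  also have "\<dots> = (\<Sum>s\<in>G. (-1) ^ card R)"
    using state_sign_times_weight[OF es R] unfolding I_def G_def N_def E_def
    by (intro sum.cong refl) auto
  also have "\<dots> = (-1) ^ card R * (2 * real n) ^ num_circles N E \<pi>"
    using card_dual_states[OF es' \<pi>' I, of n] by (simp add: G_def)
  finally show ?thesis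
    using D by (simp add: N_def E_def)
qed

lemma psi_phi_summand:
  assumes X: "valid_ograph Op X" and F: "respects_OG Op act F" and \<pi>: "\<pi> \<in> pairings (og_nhe X)"
  shows "(\<Sum>s\<in>states n X. state_sign X s *\<^sub>R
      (symplectic_weight s (pairing_edges_min (og_nhe X) \<pi>)
        *\<^sub>R F (X\<lparr>og_edges := pairing_edges_min (og_nhe X) \<pi>\<rparr>)))
    = (let R = coherent_reversal X \<pi> in
        ((2 * real n) ^ num_circles (og_nhe X) (og_edges X) \<pi> * (-1) ^ card R)
          *\<^sub>R F (X\<lparr>og_edges := induced_edges (og_nhe X) (reverse_edges R (og_edges X)) \<pi>\<rparr>))"
proof -
  define N where "N = og_nhe X"
  define E where "E = og_edges X"
  define R where "R = coherent_reversal X \<pi>"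
  define D where "D = induced_edges N (reverse_edges R E) \<pi>"
  have es: "edge_structure N E" using X by (simp add: valid_ograph_def N_def E_def)
  have R_E: "R \<subseteq> E" and coh: "coherent N (reverse_edges R E) \<pi>"
    using coherent_reversal_spec[OF es[unfolded N_def E_def] \<pi>]
    by (simp_all add: R_def N_def E_def)
  have I: "transversal {..<N} \<pi> (fst ` reverse_edges R E)"
    by (rule coherent_initial_half_edges[OF es R_E coh])
  have "symplectic_weight s (pairing_edges_min N \<pi>) *\<^sub>R F (X\<lparr>og_edges := pairing_edges_min N \<pi>\<rparr>)
      = symplectic_weight s D *\<^sub>R F (X\<lparr>og_edges := D\<rparr>)" for s
    unfolding pairing_edges_min_orientation D_def induced_edges_reverse_edges[OF es R_E]
    using \<pi> I transversal_less[OF \<pi>] unfolding N_def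
    by (rule weighted_value_orientation_invariant[OF X F])
  then have "(\<Sum>s\<in>states n X. state_sign X s *\<^sub>R
      (symplectic_weight s (pairing_edges_min N \<pi>) *\<^sub>R F (X\<lparr>og_edges := pairing_edges_min N \<pi>\<rparr>)))
    = (\<Sum>s\<in>states n X. state_sign X s * symplectic_weight s D) *\<^sub>R F (X\<lparr>og_edges := D\<rparr>)"
    by (simp add: scaleR_sum_left)
  also have "\<dots> = ((-1) ^ card R * (2 * real n) ^ num_circles N E \<pi>) *\<^sub>R F (X\<lparr>og_edges := D\<rparr>)"
    using sum_state_sign_weight[OF es[unfolded N_def E_def] \<pi> R_E[unfolded E_def]
        coh[unfolded N_def E_def]]
    by (simp add: D_def N_def E_def)
  finally show ?thesis
    by (simp add: Let_def R_def N_def E_def D_def mult.commute)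
qed

theorem proposition2p23:
  fixes Op :: "nat \<Rightarrow> 'v::real_vector set"
    and act :: "nat \<Rightarrow> (nat \<Rightarrow> nat) \<Rightarrow> 'v \<Rightarrow> 'v"
    and F :: "'v ograph \<Rightarrow> 'w::real_vector"
    and n :: nat
    and X :: "'v ograph"
  assumes "cyclic_sigma_module Op act"
    and "1 \<le> n"
    and "respects_OG Op act F"
    and "valid_ograph Op X"
  shows "psi_phi n F X = M_op n F X"
proof -
  have "psi_phi n F X = (\<Sum>\<pi>\<in>pairings (og_nhe X). \<Sum>s\<in>states n X. state_sign X s *\<^sub>R
      (symplectic_weight s (pairing_edges_min (og_nhe X) \<pi>)
        *\<^sub>R F (X\<lparr>og_edges := pairing_edges_min (og_nhe X) \<pi>\<rparr>)))"
    unfolding psi_phi_def symplectic_weight_def scaleR_sum_right by (rule sum.swap)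
  also have "\<dots> = M_op n F X"
    unfolding M_op_def by (intro sum.cong refl psi_phi_summand[OF assms(4,3)])
  finally show ?thesis .
qed

end
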